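(* Let $A,B,S\in\mathbb T$ and let $\boldsymbol\mu$ be a ratio set that witnesses $B$ or witnesses $S$. If $A\prec^{\boldsymbol\mu}B$, then $AS\prec^{\boldsymbol\mu}BS$. If $A\preccurlyeq^{\boldsymbol\mu}B$, then $AS\preccurlyeq^{\boldsymbol\mu}BS$.
   Context: $\mathbb T$ is the field of real grid-based transseries over the totally ordered group $\mathfrak G$ of transmonomials; $\operatorname{mag}T$ is the dominant monomial of $T\ne0$. A ratio set is a finite $\boldsymbol\mu\subset\{\mathfrak g\in\mathfrak G:\mathfrak g\prec1\}$; $\boldsymbol\mu^*$ (resp. $\boldsymbol\mu^+$) is the set of products of zero or more (resp. one or more) elements of $\boldsymbol\mu$. Monomials: $\mathfrak m\preccurlyeq^{\boldsymbol\mu}\mathfrak n$ iff $\mathfrak m/\mathfrak n\in\boldsymbol\mu^*$, $\mathfrak m\prec^{\boldsymbol\mu}\mathfrak n$ iff $\mathfrak m/\mathfrak n\in\boldsymbol\mu^+$. Transseries: $A\prec^{\boldsymbol\mu}B$ (resp. $\preccurlyeq^{\boldsymbol\mu}$) iff every $\mathfrak a\in\operatorname{supp}A$ satisfies $\mathfrak a\prec^{\boldsymbol\mu}\mathfrak b$ (resp. $\preccurlyeq^{\boldsymbol\mu}$) for some $\mathfrak b\in\operatorname{supp}B$. $\boldsymbol\mu$ witnesses nonzero $T$ iff $\operatorname{supp}T\subseteq(\operatorname{mag}T)\boldsymbol\mu^*$. *)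

theory Defs
  imports Complex_Main
begin

text \<open>
  The group of monomials is written ADDITIVELY: the product of monomials m n is
  m + n, the monomial 1 is 0, m/n is m - n, and the asymptotic ordering
  m \<prec> n of monomials is m < n (so "m \<prec> 1" is "m < 0").
\<close>

definition supp :: "('g \<Rightarrow> real) \<Rightarrow> 'g set" where
  "supp f = {m. f m \<noteq> 0}"

text \<open>mu^* : products of zero or more elements of mu; mu^+ : of one or more.\<close>
definition mstar :: "'g::comm_monoid_add set \<Rightarrow> 'g set" where
  "mstar mu = {sum_list xs | xs. set xs \<subseteq> mu}"

definition mplus :: "'g::comm_monoid_add set \<Rightarrow> 'g set" where
  "mplus mu = {sum_list xs | xs. xs \<noteq> [] \<and> set xs \<subseteq> mu}"

definition ratio_set :: "'g::linordered_ab_group_add set \<Rightarrow> bool" where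
  "ratio_set mu \<longleftrightarrow> finite mu \<and> mu \<subseteq> {g. g < 0}"

definition grid_based :: "('g::linordered_ab_group_add \<Rightarrow> real) \<Rightarrow> bool" where
  "grid_based f \<longleftrightarrow> (\<exists>M mu. finite M \<and> ratio_set mu \<and>
       supp f \<subseteq> {m + u | m u. m \<in> M \<and> u \<in> mstar mu})"

text \<open>Product of series (Cauchy product; the sum is finite for grid-based series).\<close>
definition ts_times :: "('g::linordered_ab_group_add \<Rightarrow> real) \<Rightarrow> ('g \<Rightarrow> real) \<Rightarrow> 'g \<Rightarrow> real" where
  "ts_times f g m = (\<Sum>p\<in>{(a, b). a \<in> supp f \<and> b \<in> supp g \<and> a + b = m}. f (fst p) * g (snd p))"

definition mag :: "('g::linorder \<Rightarrow> real) \<Rightarrow> 'g" where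
  "mag f = (GREATEST m. m \<in> supp f)"

definition mono_preceq :: "'g::ab_group_add set \<Rightarrow> 'g \<Rightarrow> 'g \<Rightarrow> bool" where
  "mono_preceq mu m n \<longleftrightarrow> m - n \<in> mstar mu"

definition mono_prec :: "'g::ab_group_add set \<Rightarrow> 'g \<Rightarrow> 'g \<Rightarrow> bool" where
  "mono_prec mu m n \<longleftrightarrow> m - n \<in> mplus mu"

definition ts_prec :: "'g::ab_group_add set \<Rightarrow> ('g \<Rightarrow> real) \<Rightarrow> ('g \<Rightarrow> real) \<Rightarrow> bool" where
  "ts_prec mu A B \<longleftrightarrow> (\<forall>a\<in>supp A. \<exists>b\<in>supp B. mono_prec mu a b)"

definition ts_preceq :: "'g::ab_group_add set \<Rightarrow> ('g \<Rightarrow> real) \<Rightarrow> ('g \<Rightarrow> real) \<Rightarrow> bool" where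
  "ts_preceq mu A B \<longleftrightarrow> (\<forall>a\<in>supp A. \<exists>b\<in>supp B. mono_preceq mu a b)"

definition witnesses :: "'g::linordered_ab_group_add set \<Rightarrow> ('g \<Rightarrow> real) \<Rightarrow> bool" where
  "witnesses mu T \<longleftrightarrow> T \<noteq> (\<lambda>_. 0) \<and> supp T \<subseteq> {mag T + u | u. u \<in> mstar mu}"

end

theory Submission
  imports Defs "HOL-Library.Infinite_Set"
begin

text \<open>
  Write a monomial of \<open>A S\<close> as \<open>a + s\<close> and pick \<open>b \<in> supp B\<close> with \<open>a \<preccurlyeq>\<^sup>\<mu> b\<close>
  (resp. \<open>\<prec>\<^sup>\<mu>\<close>). If \<open>\<mu>\<close> witnesses \<open>B\<close>, then \<open>b \<preccurlyeq>\<^sup>\<mu> mag B\<close>; among the monomials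
  \<open>t \<in> supp S\<close> with \<open>s \<preccurlyeq>\<^sup>\<mu> t\<close> take the largest one \<open>t\<^sub>0\<close> (it exists because
  grid-based supports are well-ordered for the reverse order). Then \<open>mag B + t\<^sub>0\<close> arises
  in exactly one way as a sum of monomials of \<open>B\<close> and \<open>S\<close>, so it lies in the support of
  \<open>B S\<close>, and \<open>a + s \<preccurlyeq>\<^sup>\<mu> mag B + t\<^sub>0\<close> (resp. \<open>\<prec>\<^sup>\<mu>\<close>). The case that \<open>\<mu>\<close> witnesses
  \<open>S\<close> is the same with the roles of \<open>B\<close> and \<open>S\<close> exchanged.
\<close>

lemma mstar_zero: "0 \<in> mstar mu"
  unfolding mstar_def by (auto intro!: exI[of _ "[]"])

lemma mstar_empty: "mstar {} = {0}"
  unfolding mstar_def by auto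

lemma mstar_add: "u \<in> mstar mu \<Longrightarrow> v \<in> mstar mu \<Longrightarrow> u + v \<in> mstar mu"
  unfolding mstar_def by clarify (metis set_append sum_list_append le_sup_iff)

lemma mplus_add_mstar: "u \<in> mplus mu \<Longrightarrow> v \<in> mstar mu \<Longrightarrow> u + v \<in> mplus mu"
  unfolding mstar_def mplus_def by clarify (metis Nil_is_append_conv set_append sum_list_append le_sup_iff)

lemma mstar_nonpos:
  fixes u :: "'g::linordered_ab_group_add"
  shows "ratio_set mu \<Longrightarrow> u \<in> mstar mu \<Longrightarrow> u \<le> 0"
  unfolding mstar_def ratio_set_def by (auto intro!: sum_list_nonpos)

lemma mstar_insertE:
  assumes "u \<in> mstar (insert x mu)"
  obtains n v where "v \<in> mstar mu" "u = sum_list (replicate n x) + v"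
proof -
  obtain xs where xs: "u = sum_list xs" "set xs \<subseteq> insert x mu"
    using assms unfolding mstar_def by auto
  have "sum_list xs = sum_list (replicate (count_list xs x) x) + sum_list (filter (\<lambda>y. y \<noteq> x) xs)"
    by (induction xs) (auto simp: add_ac)
  moreover have "sum_list (filter (\<lambda>y. y \<noteq> x) xs) \<in> mstar mu"
    unfolding mstar_def using xs(2) by (auto intro!: exI[of _ "filter (\<lambda>y. y \<noteq> x) xs"])
  ultimately show ?thesis using that xs(1) by blast
qed

lemma sum_list_replicate_antimono:
  fixes x :: "'g::ordered_ab_group_add"
  assumes "x \<le> 0" "m \<le> n"
  shows "sum_list (replicate n x) \<le> sum_list (replicate m x)"
proof -
  have "replicate n x = replicate m x @ replicate (n - m) x"
    using assms(2) by (metis le_add_diff_inverse replicate_add)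
  moreover have "sum_list (replicate (n - m) x) \<le> 0"
    using assms(1) by (intro sum_list_nonpos) auto
  ultimately show ?thesis by simp
qed

lemma nat_seq_incseq_subseq:
  fixes n :: "nat \<Rightarrow> nat"
  obtains r where "strict_mono r" "incseq (n \<circ> r)"
proof -
  obtain r where r: "strict_mono r" "monoseq (n \<circ> r)"
    using seq_monosub[of n] by (auto simp: comp_def)
  show ?thesis
  proof (cases "incseq (n \<circ> r)")
    case True
    with r(1) that show ?thesis by blast
  next
    case False
    with r(2) have dec: "decseq (n \<circ> r)" by (simp add: monoseq_iff)
    obtain N where N: "\<And>k. n (r N) \<le> n (r k)"
      using ex_has_least_nat[of "\<lambda>_. True" 0 "n \<circ> r"] by auto
    have "n (r (N + k)) = n (r N)" for k
      using decseqD[OF dec, of N "N + k"] N[of "N + k"] by simp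
    then have "incseq (n \<circ> (r \<circ> (\<lambda>k. N + k)))" by (simp add: incseq_def)
    moreover have "strict_mono (r \<circ> (\<lambda>k. N + k))"
      using r(1) by (intro strict_mono_o) (auto simp: strict_mono_def)
    ultimately show ?thesis using that by blast
  qed
qed

lemma mstar_no_strict_mono_seq:
  fixes f :: "nat \<Rightarrow> 'g::linordered_ab_group_add"
  assumes "finite mu" "mu \<subseteq> {g. g < 0}" "strict_mono f" "range f \<subseteq> mstar mu"
  shows False
  using assms
proof (induction mu arbitrary: f rule: finite_induct)
  case empty
  then have "f 0 = f 1" by (simp add: mstar_empty image_subset_iff)
  with \<open>strict_mono f\<close> show False by (auto dest: strict_monoD[of f 0 1])
next
  case (insert x mu)
  have "\<forall>k. \<exists>n v. v \<in> mstar mu \<and> f k = sum_list (replicate n x) + v"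
    using insert.prems(3) by (blast elim: mstar_insertE)
  then obtain n v where nv: "\<And>k. v k \<in> mstar mu" "\<And>k. f k = sum_list (replicate (n k) x) + v k"
    unfolding choice_iff by blast
  obtain r where r: "strict_mono r" "incseq (n \<circ> r)"
    using nat_seq_incseq_subseq .
  have "x \<le> 0" using insert.prems(1) by auto
  \<comment> \<open>along \<open>r\<close> the \<open>x\<close>-part decreases, so the \<open>mu\<close>-part has to increase strictly\<close>
  have "v (r i) < v (r (Suc i))" for i
  proof (rule ccontr)
    assume "\<not> v (r i) < v (r (Suc i))"
    moreover have "sum_list (replicate (n (r (Suc i))) x) \<le> sum_list (replicate (n (r i)) x)"
      using r(2) \<open>x \<le> 0\<close> by (intro sum_list_replicate_antimono) (auto simp: incseq_Suc_iff)
    ultimately have "f (r (Suc i)) \<le> f (r i)"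
      unfolding nv(2) by (intro add_mono) (auto simp: not_less)
    moreover have "f (r i) < f (r (Suc i))"
      using r(1) insert.prems(2) by (simp add: strict_mono_def)
    ultimately show False by simp
  qed
  then have "strict_mono (v \<circ> r)" by (simp add: strict_mono_Suc_iff)
  moreover have "range (v \<circ> r) \<subseteq> mstar mu" using nv(1) by auto
  moreover have "mu \<subseteq> {g. g < 0}" using insert.prems(1) by simp
  ultimately show False using insert.IH by blast
qed

lemma grid_no_strict_mono_seq:
  fixes f :: "nat \<Rightarrow> 'g::linordered_ab_group_add"
  assumes "finite M" "ratio_set mu" "strict_mono f"
    and "range f \<subseteq> {m + u | m u. m \<in> M \<and> u \<in> mstar mu}"
  shows False
proof -
  have "\<forall>k. \<exists>m u. m \<in> M \<and> u \<in> mstar mu \<and> f k = m + u"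
    using assms(4) by blast
  then obtain g u where gu: "\<And>k. g k \<in> M" "\<And>k. u k \<in> mstar mu" "\<And>k. f k = g k + u k"
    unfolding choice_iff by blast
  have "finite (range g)" using finite_subset[of "range g" M] gu(1) assms(1) by blast
  then obtain k0 where "infinite {k. g k = g k0}"
    using pigeonhole_infinite[of UNIV g] by auto
  then obtain r :: "nat \<Rightarrow> nat" where r: "strict_mono r" "\<And>k. g (r k) = g k0"
    using infinite_enumerate by blast
  have "strict_mono (u \<circ> r)"
    using strict_mono_o[OF assms(3) r(1)] by (simp add: strict_mono_def gu(3) r(2))
  then show False
    using mstar_no_strict_mono_seq[of mu "u \<circ> r"] assms(2) gu(2)
    unfolding ratio_set_def by auto
qed

lemma grid_based_subset_has_max:
  fixes F :: "'g::linordered_ab_group_add \<Rightarrow> real"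
  assumes "grid_based F" "X \<subseteq> supp F" "X \<noteq> {}"
  obtains m where "m \<in> X" "\<And>y. y \<in> X \<Longrightarrow> y \<le> m"
proof -
  obtain M mu where M: "finite M" "ratio_set mu"
    "supp F \<subseteq> {m + u | m u. m \<in> M \<and> u \<in> mstar mu}"
    using assms(1) unfolding grid_based_def by blast
  define R where "R = {(y, x). x \<in> X \<and> y \<in> X \<and> x < y}"
  have grid: "X \<subseteq> {m + u | m u. m \<in> M \<and> u \<in> mstar mu}"
    using assms(2) M(3) by (rule order.trans)
  have "wf R"
  proof (unfold wf_iff_no_infinite_down_chain, rule notI, elim exE)
    fix f assume "\<forall>i. (f (Suc i), f i) \<in> R"
    then have "strict_mono f" "range f \<subseteq> X"
      unfolding R_def strict_mono_Suc_iff by auto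
    from \<open>range f \<subseteq> X\<close> grid have "range f \<subseteq> {m + u | m u. m \<in> M \<and> u \<in> mstar mu}"
      by (rule order.trans)
    then show False by (rule grid_no_strict_mono_seq[OF M(1,2) \<open>strict_mono f\<close>])
  qed
  then obtain m where m: "m \<in> X" "\<And>y. (y, m) \<in> R \<Longrightarrow> y \<notin> X"
    using assms(3) by (rule wfE_min') blast
  show ?thesis
  proof (rule that[OF m(1)])
    fix y assume "y \<in> X"
    show "y \<le> m"
    proof (rule ccontr)
      assume "\<not> y \<le> m"
      with \<open>y \<in> X\<close> m(1) have "(y, m) \<in> R" by (simp add: R_def)
      with m(2) \<open>y \<in> X\<close> show False by blast
    qed
  qed
qed

lemma ts_times_commute: "ts_times A B = ts_times B A"
proof
  fix m
  have "{(b, a). b \<in> supp B \<and> a \<in> supp A \<and> b + a = m}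
      = prod.swap ` {(a, b). a \<in> supp A \<and> b \<in> supp B \<and> a + b = m}"
    by (auto simp: image_iff add.commute)
  then show "ts_times A B m = ts_times B A m"
    unfolding ts_times_def by (simp add: sum.reindex mult.commute)
qed

lemma supp_ts_timesE:
  assumes "c \<in> supp (ts_times A S)"
  obtains a s where "a \<in> supp A" "s \<in> supp S" "c = a + s"
proof -
  have "ts_times A S c \<noteq> 0" using assms by (simp add: supp_def)
  then have "{(a, s). a \<in> supp A \<and> s \<in> supp S \<and> a + s = c} \<noteq> {}"
    unfolding ts_times_def by (metis sum.empty)
  then show ?thesis using that by auto
qed

lemma witnessed_mag:
  assumes "grid_based T" "witnesses mu T"
  shows "mag T \<in> supp T" "\<And>y. y \<in> supp T \<Longrightarrow> y - mag T \<in> mstar mu"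
proof -
  have "supp T \<noteq> {}" using assms(2) unfolding witnesses_def supp_def by auto
  then obtain m where m: "m \<in> supp T" "\<And>y. y \<in> supp T \<Longrightarrow> y \<le> m"
    using grid_based_subset_has_max[OF assms(1) order_refl] by blast
  then have "mag T = m" unfolding mag_def by (intro Greatest_equality) auto
  with m(1) show "mag T \<in> supp T" by simp
  fix y assume "y \<in> supp T"
  then obtain u where "u \<in> mstar mu" "y = mag T + u"
    using assms(2) unfolding witnesses_def by blast
  then show "y - mag T \<in> mstar mu" by simp
qed

text \<open>
  The monomial \<open>mag T + t\<^sub>0\<close> is produced only by the pair \<open>(mag T, t\<^sub>0)\<close>: a competitor
  \<open>(x, y)\<close> has \<open>t\<^sub>0 - y = x - mag T \<in> \<mu>\<^sup>*\<close>, so \<open>y\<close> is again a candidate and the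
  maximality of \<open>t\<^sub>0\<close> forces \<open>y = t\<^sub>0\<close>.
\<close>
lemma witnessed_times_supp:
  fixes T U :: "'g::linordered_ab_group_add \<Rightarrow> real"
  assumes "grid_based T" "grid_based U" "ratio_set mu" "witnesses mu T" "s \<in> supp U"
  obtains t0 where "s - t0 \<in> mstar mu" "mag T + t0 \<in> supp (ts_times T U)"
proof -
  let ?g = "mag T"
  note g = witnessed_mag[OF assms(1,4)]
  define C where "C = {t \<in> supp U. s - t \<in> mstar mu}"
  have "s \<in> C" using assms(5) mstar_zero by (simp add: C_def)
  then obtain t0 where t0: "t0 \<in> C" "\<And>y. y \<in> C \<Longrightarrow> y \<le> t0"
    using grid_based_subset_has_max[OF assms(2), of C] unfolding C_def by blast
  have unique: "{(x, y). x \<in> supp T \<and> y \<in> supp U \<and> x + y = ?g + t0} = {(?g, t0)}"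
  proof (intro equalityI subsetI)
    fix p assume "p \<in> {(x, y). x \<in> supp T \<and> y \<in> supp U \<and> x + y = ?g + t0}"
    then obtain x y where p: "p = (x, y)" "x \<in> supp T" "y \<in> supp U" "x + y = ?g + t0"
      by auto
    have xg: "x - ?g \<in> mstar mu" using g(2) p(2) .
    have diff: "t0 - y = x - ?g" using p(4) by (simp add: algebra_simps)
    have sy: "s - y = (s - t0) + (x - ?g)" using diff by (simp add: algebra_simps)
    have "s - t0 \<in> mstar mu" using t0(1) by (simp add: C_def)
    then have "s - y \<in> mstar mu" unfolding sy using xg by (rule mstar_add)
    then have "y \<in> C" using p(3) by (simp add: C_def)
    moreover have "t0 - y \<le> 0" using mstar_nonpos[OF assms(3) xg] diff by (simp only:)
    then have "t0 \<le> y" by simp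
    ultimately have "y = t0" using t0(2) by (simp add: antisym)
    then show "p \<in> {(?g, t0)}" using p(1,4) by simp
  qed (use g(1) t0(1) C_def in auto)
  have "ts_times T U (?g + t0) = T ?g * U t0"
    unfolding ts_times_def unique by simp
  then have "?g + t0 \<in> supp (ts_times T U)"
    using g(1) t0(1) unfolding supp_def C_def by simp
  then show ?thesis using that t0(1) C_def by blast
qed

text \<open>
  Both relations of the theorem have the form \<open>a - b \<in> R\<close> with \<open>R = \<mu>\<^sup>+\<close> or \<open>R = \<mu>\<^sup>*\<close>;
  all that is used is that \<open>R + \<mu>\<^sup>* \<subseteq> R\<close>.
\<close>
lemma ts_times_rel_right:
  fixes A B S :: "'g::linordered_ab_group_add \<Rightarrow> real"
  assumes "grid_based B" "grid_based S" "ratio_set mu"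
    and wit: "witnesses mu B \<or> witnesses mu S"
    and R: "\<And>u v. u \<in> R \<Longrightarrow> v \<in> mstar mu \<Longrightarrow> u + v \<in> R"
    and AB: "\<forall>a\<in>supp A. \<exists>b\<in>supp B. a - b \<in> R"
    and c: "c \<in> supp (ts_times A S)"
  shows "\<exists>d\<in>supp (ts_times B S). c - d \<in> R"
proof -
  obtain a s where as: "a \<in> supp A" "s \<in> supp S" "c = a + s"
    using c by (rule supp_ts_timesE)
  obtain b where b: "b \<in> supp B" "a - b \<in> R" using AB as(1) by blast
  from wit show ?thesis
  proof
    assume W: "witnesses mu B"
    obtain t0 where t0: "s - t0 \<in> mstar mu" "mag B + t0 \<in> supp (ts_times B S)"
      using witnessed_times_supp[OF assms(1-3) W as(2)] .
    have "c - (mag B + t0) = (a - b) + ((b - mag B) + (s - t0))"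
      using as(3) by (simp add: algebra_simps)
    also have "\<dots> \<in> R"
      using R[OF b(2) mstar_add[OF witnessed_mag(2)[OF assms(1) W b(1)] t0(1)]] .
    finally show ?thesis using t0(2) by blast
  next
    assume W: "witnesses mu S"
    obtain t0 where t0: "b - t0 \<in> mstar mu" "mag S + t0 \<in> supp (ts_times B S)"
      using witnessed_times_supp[OF assms(2,1,3) W b(1)] unfolding ts_times_commute[of S B] .
    have "c - (mag S + t0) = (a - b) + ((b - t0) + (s - mag S))"
      using as(3) by (simp add: algebra_simps)
    also have "\<dots> \<in> R"
      using R[OF b(2) mstar_add[OF t0(1) witnessed_mag(2)[OF assms(2) W as(2)]]] .
    finally show ?thesis using t0(2) by blast
  qed
qed

theorem proposition3p6:
  fixes A B S :: "'g::linordered_ab_group_add \<Rightarrow> real" and mu :: "'g set"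
  assumes "grid_based A" and "grid_based B" and "grid_based S"
    and "ratio_set mu"
    and "witnesses mu B \<or> witnesses mu S"
  shows "(ts_prec mu A B \<longrightarrow> ts_prec mu (ts_times A S) (ts_times B S))
       \<and> (ts_preceq mu A B \<longrightarrow> ts_preceq mu (ts_times A S) (ts_times B S))"
proof (intro conjI impI)
  assume "ts_prec mu A B"
  then show "ts_prec mu (ts_times A S) (ts_times B S)"
    using ts_times_rel_right[OF assms(2-5), of "mplus mu" A] mplus_add_mstar
    unfolding ts_prec_def mono_prec_def by blast
next
  assume "ts_preceq mu A B"
  then show "ts_preceq mu (ts_times A S) (ts_times B S)"
    using ts_times_rel_right[OF assms(2-5), of "mstar mu" A] mstar_add
    unfolding ts_preceq_def mono_preceq_def by blast
qed

end
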